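(* Let $b>0$ and $c\ge1$ be constants, and for each $M\in\mathbb{N}$ let $a_M\in[1/2,1)$ with $a_M/(1-a_M)\le c^M$. Let $A_1=\{z\in\mathbb{R}^M:\sum_iz_i<0\}$, $A_2=\{z:\sum_iz_i\ge0\}$ and $$\tilde\pi(z)\propto a_MN_M(z;-b\mathbf{1}_M,I_M)\mathbf{1}_{A_1}(z)+(1-a_M)N_M(z;b\mathbf{1}_M,I_M)\mathbf{1}_{A_2}(z).$$ Let $\beta_0<\beta_1<\dots<\beta_N$ be the distinct elements of $\{M^{-(M-k)/M}:k=0,\dots,M\}\cup\{k/M:k=1,\dots,M\}$ in increasing order, and $\pi_k\propto\tilde\pi^{\beta_k}$. Then for $\mathcal{A}=\{A_1,\dots,A_2\}$: $\pi_k[A_1]$ is nondecreasing in $k$, $\gamma(\mathcal{A})\ge1/2$, and $\delta(\mathcal{A})\ge\frac{1}{2c\sqrt M}$.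
   Context: $N_M(z;\nu,\Sigma)$ is the $M$-variate normal density; $\mathbf{1}_M$ the all-ones vector; $I_M$ the identity; Lebesgue measure on $\mathbb{R}^M$; $\pi_k[A]=\int_A\pi_k$. Overlap $\delta(\mathcal{A})=\min_{|k-l|=1,\,j}\frac{1}{\pi_k[A_j]}\int_{A_j}\min\{\pi_k,\pi_l\}$ with $k,l\in\{0,\dots,N\}$; $\gamma(\mathcal{A})=\min_j\prod_{k=1}^N\min\{1,\pi_{k-1}[A_j]/\pi_k[A_j]\}$. *)

theory Defs
  imports "HOL-Analysis.Analysis"
begin

definition normal_id_dens :: "real^'n \<Rightarrow> real^'n \<Rightarrow> real" where
  "normal_id_dens mu z = (2 * pi) powr (- real CARD('n) / 2) * exp (- (norm (z - mu))\<^sup>2 / 2)"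

definition A1 :: "(real^'n) set" where
  "A1 = {z. (\<Sum>i\<in>UNIV. z $ i) < 0}"

definition A2 :: "(real^'n) set" where
  "A2 = {z. (\<Sum>i\<in>UNIV. z $ i) \<ge> 0}"

text \<open>Unnormalised target density (normalising constant of pi-tilde cancels in pi_k).\<close>
definition pi_tilde :: "real \<Rightarrow> real \<Rightarrow> real^'n \<Rightarrow> real" where
  "pi_tilde a b z = a * normal_id_dens (\<chi> i. - b) z * indicator A1 z
                  + (1 - a) * normal_id_dens (\<chi> i. b) z * indicator A2 z"

definition pi_temp :: "real \<Rightarrow> real \<Rightarrow> real \<Rightarrow> real^'n \<Rightarrow> real" where
  "pi_temp a b beta z = pi_tilde a b z powr beta / (\<integral>x. pi_tilde a b (x :: real^'n) powr beta \<partial>lborel)"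

definition pi_meas :: "real \<Rightarrow> real \<Rightarrow> real \<Rightarrow> (real^'n) set \<Rightarrow> real" where
  "pi_meas a b beta A = (LINT z:A|lborel. pi_temp a b beta z)"

definition betas :: "nat \<Rightarrow> real list" where
  "betas M = sorted_list_of_set
     ((\<lambda>k. real M powr (- (real M - real k) / real M)) ` {0..M}
      \<union> (\<lambda>k. real k / real M) ` {1..M})"

end

theory Submission
  imports Defs "HOL-Probability.Probability"
begin

(* Since the components live on disjoint sets, pi_tilde^beta is again such a mixture: on each
   half-space it is an isotropic Gaussian of precision beta (mean -b*1 on A1, b*1 on A2),
   and the mixture weights become a^beta : (1-a)^beta.  Reflection arguments show that each
   Gaussian has the same mass, at least 1/2, on its half-space, so pi_beta[A1] is exactly
   the tempered weight a^beta/(a^beta+(1-a)^beta), independently of the dimension M.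

   From these the
   monotonicity of pi_k[A1], the bound gamma >= 1/2 (any increasing schedule) and the overlap
   bound delta >= 1/(2 c sqrt M) (any two exponents at distance <= 1/M with ratio r satisfying
   r^(M/2) <= sqrt M) follow. *)

(* Tempering a standard normal density to the power beta yields,
   up to a constant factor, exactly this density. *)
definition gauss :: "real \<Rightarrow> 'a::euclidean_space \<Rightarrow> 'a \<Rightarrow> real" where
  "gauss \<beta> \<mu> z = (\<beta> / (2*pi)) powr (real DIM('a) / 2) * exp (- \<beta> * (norm (z - \<mu>))\<^sup>2 / 2)"

lemma gauss_nonneg: "\<beta> > 0 \<Longrightarrow> 0 \<le> gauss \<beta> \<mu> z"
  by (simp add: gauss_def)

lemma gauss_measurable [measurable]: "gauss \<beta> \<mu> \<in> borel_measurable borel"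
  unfolding gauss_def by measurable

(* The Gaussian factorises over the coordinates of any orthonormal basis; this reduces
   its normalisation to the one-dimensional case. *)
lemma gauss_as_product:
  fixes \<mu> z :: "'a::euclidean_space"
  assumes "\<beta> > 0"
  shows "gauss \<beta> \<mu> z = (\<Prod>u\<in>Basis. normal_density (\<mu> \<bullet> u) (1 / sqrt \<beta>) (z \<bullet> u))"
proof -
  have factor: "normal_density (\<mu> \<bullet> u) (1 / sqrt \<beta>) (z \<bullet> u)
      = sqrt (\<beta> / (2*pi)) * exp (- \<beta> * ((z - \<mu>) \<bullet> u)\<^sup>2 / 2)" for u
    using assms by (simp add: normal_density_def power_divide real_sqrt_divide inner_diff_left field_simps)
  have const: "sqrt (\<beta> / (2*pi)) ^ DIM('a) = (\<beta> / (2*pi)) powr (real DIM('a) / 2)"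
    using assms by (simp add: sqrt_def root_powr_inverse powr_realpow[symmetric] powr_powr)
  have norm_sum: "(norm (z - \<mu>))\<^sup>2 = (\<Sum>u\<in>(Basis::'a set). ((z - \<mu>) \<bullet> u)\<^sup>2)"
    unfolding power2_norm_eq_inner by (subst euclidean_inner) (simp add: power2_eq_square)
  have "(\<Prod>u\<in>(Basis::'a set). exp (- \<beta> * ((z - \<mu>) \<bullet> u)\<^sup>2 / 2)) = exp (- \<beta> * (norm (z - \<mu>))\<^sup>2 / 2)"
    by (simp add: exp_sum[symmetric] norm_sum sum_distrib_left sum_divide_distrib sum_negf)
  then show ?thesis
    by (simp add: factor prod.distrib const gauss_def)
qed

lemma gauss_nn_integral:
  fixes \<mu> :: "'a::euclidean_space"
  assumes "\<beta> > 0"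
  shows "(\<integral>\<^sup>+z. ennreal (gauss \<beta> \<mu> z) \<partial>lborel) = 1"
proof -
  have "(\<integral>\<^sup>+z. ennreal (gauss \<beta> \<mu> z) \<partial>lborel)
      = (\<integral>\<^sup>+z. (\<Prod>u\<in>Basis. ennreal (normal_density (\<mu> \<bullet> u) (1 / sqrt \<beta>) (z \<bullet> u))) \<partial>lborel)"
    using assms by (simp add: gauss_as_product prod_ennreal)
  also have "\<dots> = (\<Prod>u\<in>(Basis::'a set). \<integral>\<^sup>+x. ennreal (normal_density (\<mu> \<bullet> u) (1 / sqrt \<beta>) x) \<partial>lborel)"
    by (rule nn_integral_lborel_prod) auto
  also have "\<dots> = 1"
    using assms by (subst nn_integral_eq_integral) (auto simp: integrable_normal_density integral_normal_density)
  finally show ?thesis .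
qed

lemma gauss_integrable:
  assumes "\<beta> > 0"
  shows "integrable lborel (gauss \<beta> \<mu>)"
  using gauss_nn_integral[OF assms, of \<mu>] gauss_nonneg[OF assms]
  by (intro integrableI_nonneg) auto

lemma gauss_integral:
  assumes "\<beta> > 0"
  shows "(\<integral>z. gauss \<beta> \<mu> z \<partial>lborel) = 1"
  using gauss_nn_integral[OF assms, of \<mu>] gauss_nonneg[OF assms]
  by (subst integral_eq_nn_integral) auto

lemma gauss_set_integrable:
  assumes "\<beta> > 0" "A \<in> sets lborel"
  shows "set_integrable lborel A (gauss \<beta> \<mu>)"
  using integrable_mult_indicator[OF assms(2) gauss_integrable[OF assms(1)]]
  by (simp add: set_integrable_def)

lemma gauss_set_integral_eq_nn:
  assumes "\<beta> > 0" "A \<in> sets lborel"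
  shows "ennreal (LINT z:A|lborel. gauss \<beta> \<mu> z) = (\<integral>\<^sup>+z. ennreal (indicator A z * gauss \<beta> \<mu> z) \<partial>lborel)"
  using integrable_mult_indicator[OF assms(2) gauss_integrable[OF assms(1)]] gauss_nonneg[OF assms(1)]
  unfolding set_lebesgue_integral_def
  by (subst nn_integral_eq_integral) (auto intro!: AE_I2 split: split_indicator)

lemma gauss_set_integral_bounds:
  assumes "\<beta> > 0" "A \<in> sets lborel"
  shows "0 \<le> (LINT z:A|lborel. gauss \<beta> \<mu> z)" "(LINT z:A|lborel. gauss \<beta> \<mu> z) \<le> 1"
proof -
  show "0 \<le> (LINT z:A|lborel. gauss \<beta> \<mu> z)"
    using gauss_nonneg[OF assms(1)] unfolding set_lebesgue_integral_def
    by (intro integral_nonneg_AE) (auto intro!: AE_I2 split: split_indicator)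
  have "(\<integral>z. indicator A z * gauss \<beta> \<mu> z \<partial>lborel) \<le> (\<integral>z. gauss \<beta> \<mu> z \<partial>lborel)"
    using integrable_mult_indicator[OF assms(2) gauss_integrable[OF assms(1)]] gauss_integrable[OF assms(1)]
      gauss_nonneg[OF assms(1)]
    by (intro integral_mono) (auto split: split_indicator)
  then show "(LINT z:A|lborel. gauss \<beta> \<mu> z) \<le> 1"
    by (simp add: gauss_integral[OF assms(1)] set_lebesgue_integral_def)
qed

lemma gauss_point_reflection: "gauss \<beta> \<mu> (2 *\<^sub>R \<mu> - z) = gauss \<beta> \<mu> z"
proof -
  have "2 *\<^sub>R \<mu> - z - \<mu> = - (z - \<mu>)" by (simp add: scaleR_2 algebra_simps)
  then have "norm (2 *\<^sub>R \<mu> - z - \<mu>) = norm (z - \<mu>)" by (metis norm_minus_cancel)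
  then show ?thesis by (simp add: gauss_def)
qed

lemma gauss_negate: "gauss \<beta> (- \<mu>) (- z) = gauss \<beta> \<mu> z"
proof -
  have "norm (- z - - \<mu>) = norm (z - \<mu>)"
    by (metis minus_diff_eq minus_diff_minus norm_minus_cancel)
  then show ?thesis by (simp add: gauss_def)
qed

lemma gauss_precision_le:
  fixes \<mu> z :: "'a::euclidean_space"
  assumes "0 < \<beta>" "\<beta> \<le> \<beta>'"
  shows "gauss \<beta>' \<mu> z \<le> (\<beta>' / \<beta>) powr (real DIM('a) / 2) * gauss \<beta> \<mu> z"
proof -
  have "(\<beta>' / (2*pi)) powr (real DIM('a) / 2)
      = (\<beta>' / \<beta>) powr (real DIM('a) / 2) * (\<beta> / (2*pi)) powr (real DIM('a) / 2)"
    using assms by (simp add: powr_mult[symmetric])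
  moreover have "exp (- \<beta>' * (norm (z - \<mu>))\<^sup>2 / 2) \<le> exp (- \<beta> * (norm (z - \<mu>))\<^sup>2 / 2)"
    using assms by (simp add: mult_right_mono)
  ultimately show ?thesis
    unfolding gauss_def by (simp add: mult.assoc mult_left_mono)
qed

lemma nn_integral_lborel_reflect:
  fixes t :: "'a::euclidean_space"
  assumes [measurable]: "f \<in> borel_measurable borel"
  shows "(\<integral>\<^sup>+x. f x \<partial>lborel) = (\<integral>\<^sup>+x. f (t - x) \<partial>lborel)"
proof -
  have "(\<integral>\<^sup>+x. f x \<partial>lborel)
      = (\<integral>\<^sup>+x. f x \<partial>density (distr lborel borel (\<lambda>x. t + (-1) *\<^sub>R x)) (\<lambda>_. \<bar>-1::real\<bar> ^ DIM('a)))"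
    by (subst lborel_affine[of "-1" t, symmetric]) auto
  also have "\<dots> = (\<integral>\<^sup>+x. f (t - x) \<partial>lborel)"
    by (simp add: nn_integral_density nn_integral_distr)
  finally show ?thesis .
qed

(* A Gaussian whose mean lies in an open half-space through the origin puts at least half
   of its mass there: reflecting through the mean maps the complement into the half-space. *)
lemma gauss_halfspace_ge_half:
  fixes v \<mu> :: "'a::euclidean_space"
  assumes \<beta>: "\<beta> > 0" and \<mu>: "v \<bullet> \<mu> < 0"
  shows "1/2 \<le> (LINT z:{z. v \<bullet> z < 0}|lborel. gauss \<beta> \<mu> z)"
proof -
  define H where "H = {z :: 'a. v \<bullet> z < 0}"
  have H_sets [measurable]: "H \<in> sets lborel" "- H \<in> sets lborel"
    unfolding H_def by measurable
  have "(LINT z:H|lborel. gauss \<beta> \<mu> z) + (LINT z:-H|lborel. gauss \<beta> \<mu> z)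
      = (LINT z:H \<union> -H|lborel. gauss \<beta> \<mu> z)"
    using gauss_set_integrable[OF \<beta> H_sets(1)] gauss_set_integrable[OF \<beta> H_sets(2)]
    by (intro set_integral_Un[symmetric]) auto
  also have "\<dots> = 1"
    using set_integral_space[OF gauss_integrable[OF \<beta>], of \<mu>] gauss_integral[OF \<beta>, of \<mu>] by simp
  finally have total: "(LINT z:H|lborel. gauss \<beta> \<mu> z) + (LINT z:-H|lborel. gauss \<beta> \<mu> z) = 1" .
  have "ennreal (LINT z:-H|lborel. gauss \<beta> \<mu> z)
      = (\<integral>\<^sup>+z. ennreal (indicator (- H) (2 *\<^sub>R \<mu> - z) * gauss \<beta> \<mu> (2 *\<^sub>R \<mu> - z)) \<partial>lborel)"
    unfolding gauss_set_integral_eq_nn[OF \<beta> H_sets(2)] by (rule nn_integral_lborel_reflect) measurable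
  also have "\<dots> \<le> (\<integral>\<^sup>+z. ennreal (indicator H z * gauss \<beta> \<mu> z) \<partial>lborel)"
  proof (rule nn_integral_mono)
    fix z :: 'a
    have "indicator (- H) (2 *\<^sub>R \<mu> - z) \<le> (indicator H z :: real)"
      using \<mu> by (auto simp: H_def inner_diff_right split: split_indicator)
    then show "ennreal (indicator (- H) (2 *\<^sub>R \<mu> - z) * gauss \<beta> \<mu> (2 *\<^sub>R \<mu> - z))
        \<le> ennreal (indicator H z * gauss \<beta> \<mu> z)"
      using gauss_nonneg[OF \<beta>] by (auto simp: gauss_point_reflection intro!: ennreal_leI mult_right_mono)
  qed
  also have "\<dots> = ennreal (LINT z:H|lborel. gauss \<beta> \<mu> z)"
    by (rule gauss_set_integral_eq_nn[OF \<beta> H_sets(1), symmetric])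
  finally have "(LINT z:-H|lborel. gauss \<beta> \<mu> z) \<le> (LINT z:H|lborel. gauss \<beta> \<mu> z)"
    using gauss_set_integral_bounds(1)[OF \<beta> H_sets(1)] by (simp add: ennreal_le_iff)
  then show ?thesis using total by (simp add: H_def)
qed

lemma hyperplane_null_sets:
  fixes v :: "'a::euclidean_space"
  assumes "v \<noteq> 0"
  shows "{z. v \<bullet> z = 0} \<in> null_sets lborel"
proof -
  have "negligible {z. v \<bullet> z = 0}" using assms by (intro negligible_hyperplane) simp
  moreover have "{z. v \<bullet> z = 0} \<in> sets lborel" by measurable
  ultimately show ?thesis by (auto simp: null_sets_completion_iff negligible_iff_null_sets)
qed

lemma gauss_halfspace_reflect:
  fixes v \<mu> :: "'a::euclidean_space"
  assumes \<beta>: "\<beta> > 0" and v: "v \<noteq> 0"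
  shows "(LINT z:{z. v \<bullet> z \<ge> 0}|lborel. gauss \<beta> (- \<mu>) z) = (LINT z:{z. v \<bullet> z < 0}|lborel. gauss \<beta> \<mu> z)"
proof -
  have sets [measurable]: "{z :: 'a. v \<bullet> z \<ge> 0} \<in> sets lborel" "{z :: 'a. v \<bullet> z < 0} \<in> sets lborel"
    by measurable
  have "ennreal (LINT z:{z. v \<bullet> z \<ge> 0}|lborel. gauss \<beta> (- \<mu>) z)
      = (\<integral>\<^sup>+z. ennreal (indicator {z. v \<bullet> z \<ge> 0} (0 - z) * gauss \<beta> (- \<mu>) (0 - z)) \<partial>lborel)"
    unfolding gauss_set_integral_eq_nn[OF \<beta> sets(1)] by (rule nn_integral_lborel_reflect) measurable
  also have "\<dots> = (\<integral>\<^sup>+z. ennreal (indicator {z. v \<bullet> z < 0} z * gauss \<beta> \<mu> z) \<partial>lborel)"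
  proof (rule nn_integral_cong_AE)
    show "AE z in lborel. ennreal (indicator {z. v \<bullet> z \<ge> 0} (0 - z) * gauss \<beta> (- \<mu>) (0 - z))
        = ennreal (indicator {z. v \<bullet> z < 0} z * gauss \<beta> \<mu> z)"
      using AE_not_in[OF hyperplane_null_sets[OF v]]
      by eventually_elim (auto simp: gauss_negate split: split_indicator)
  qed
  also have "\<dots> = ennreal (LINT z:{z. v \<bullet> z < 0}|lborel. gauss \<beta> \<mu> z)"
    by (rule gauss_set_integral_eq_nn[OF \<beta> sets(2), symmetric])
  finally show ?thesis
    using gauss_set_integral_bounds(1)[OF \<beta> sets(1)] gauss_set_integral_bounds(1)[OF \<beta> sets(2)]
    by simp
qed

lemma set_integrable_min:
  fixes p q :: "'a \<Rightarrow> real"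
  assumes "set_integrable M A p" "set_integrable M A q"
  shows "set_integrable M A (\<lambda>z. min (p z) (q z))"
proof -
  have "integrable M (\<lambda>z. min (indicator A z *\<^sub>R p z) (indicator A z *\<^sub>R q z))"
    using assms unfolding set_integrable_def by (rule integrable_min)
  then show ?thesis
    unfolding set_integrable_def
    by (rule Bochner_Integration.integrable_cong[THEN iffD1, rotated 2]) (auto split: split_indicator)
qed

(* Both densities dominate (w_j/R) times the Gaussian of the
   larger precision, where R bounds the ratio of normalising constants; integrating the
   latter over A gives at least 1/2. *)
lemma gauss_overlap:
  fixes A :: "'a::euclidean_space set" and \<mu> :: 'a and p1 p2 :: "'a \<Rightarrow> real"
  assumes A: "A \<in> sets lborel" and half: "\<And>\<beta>. \<beta> > 0 \<Longrightarrow> 1/2 \<le> (LINT z:A|lborel. gauss \<beta> \<mu> z)"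
    and \<beta>: "0 < \<beta>1" "0 < \<beta>2" and w: "0 \<le> w1" "0 \<le> w2"
    and p1: "\<And>z. z \<in> A \<Longrightarrow> p1 z = w1 * gauss \<beta>1 \<mu> z / (LINT z:A|lborel. gauss \<beta>1 \<mu> z)"
    and p2: "\<And>z. z \<in> A \<Longrightarrow> p2 z = w2 * gauss \<beta>2 \<mu> z / (LINT z:A|lborel. gauss \<beta>2 \<mu> z)"
  defines "R \<equiv> (max \<beta>1 \<beta>2 / min \<beta>1 \<beta>2) powr (real DIM('a) / 2)"
  shows "min w1 w2 / (2 * R) \<le> (LINT z:A|lborel. min (p1 z) (p2 z))"
proof -
  define \<beta>' where "\<beta>' = max \<beta>1 \<beta>2"
  have R: "1 \<le> R" unfolding R_def using \<beta> by (intro ge_one_powr_ge_zero) auto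
  have lower: "(w / R) * gauss \<beta>' \<mu> z \<le> w * gauss \<beta> \<mu> z / (LINT z:A|lborel. gauss \<beta> \<mu> z)"
    if "\<beta> \<in> {\<beta>1, \<beta>2}" "0 \<le> w" for \<beta> w z
  proof -
    let ?m = "LINT z:A|lborel. gauss \<beta> \<mu> z"
    have \<beta>0: "0 < \<beta>" and "\<beta> \<le> \<beta>'" and ratio: "\<beta>' / \<beta> \<le> max \<beta>1 \<beta>2 / min \<beta>1 \<beta>2"
      using that \<beta> by (auto simp: \<beta>'_def intro!: divide_left_mono)
    have m: "0 < ?m" "?m \<le> 1"
      using half[OF \<beta>0] gauss_set_integral_bounds[OF \<beta>0 A] by auto
    have g: "0 \<le> gauss \<beta> \<mu> z" by (rule gauss_nonneg[OF \<beta>0])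
    have "(w / R) * gauss \<beta>' \<mu> z \<le> (w / R) * ((\<beta>' / \<beta>) powr (real DIM('a) / 2) * gauss \<beta> \<mu> z)"
      using gauss_precision_le[OF \<beta>0 \<open>\<beta> \<le> \<beta>'\<close>] R that(2) by (intro mult_left_mono) auto
    also have "\<dots> \<le> (w / R) * (R * gauss \<beta> \<mu> z)"
      unfolding R_def using ratio \<beta>0 \<open>\<beta> \<le> \<beta>'\<close> g that(2)
      by (intro mult_left_mono mult_right_mono powr_mono2) auto
    also have "\<dots> = w * gauss \<beta> \<mu> z"
      using R by simp
    also have "\<dots> \<le> w * gauss \<beta> \<mu> z / ?m"
      using m g that(2) by (simp add: le_divide_eq mult_right_le_one_le)
    finally show ?thesis .
  qed
  have int: "set_integrable lborel A p1" "set_integrable lborel A p2"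
    using gauss_set_integrable[OF \<beta>(1) A] gauss_set_integrable[OF \<beta>(2) A]
    by (simp_all add: set_integrable_cong[OF refl refl, of A p1] set_integrable_cong[OF refl refl, of A p2] p1 p2)
  have "1/2 \<le> (LINT z:A|lborel. gauss \<beta>' \<mu> z)"
    using half \<beta> by (simp add: \<beta>'_def)
  then have "(min w1 w2 / R) * (1/2) \<le> (min w1 w2 / R) * (LINT z:A|lborel. gauss \<beta>' \<mu> z)"
    using w R by (intro mult_left_mono) auto
  then have "min w1 w2 / (2 * R) \<le> (min w1 w2 / R) * (LINT z:A|lborel. gauss \<beta>' \<mu> z)"
    by simp
  also have "\<dots> = (LINT z:A|lborel. (min w1 w2 / R) * gauss \<beta>' \<mu> z)"
    by simp
  also have "\<dots> \<le> (LINT z:A|lborel. min (p1 z) (p2 z))"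
  proof (rule set_integral_mono)
    show "set_integrable lborel A (\<lambda>z. (min w1 w2 / R) * gauss \<beta>' \<mu> z)"
      using gauss_set_integrable[of \<beta>' A \<mu>] \<beta> A by (simp add: \<beta>'_def)
    show "set_integrable lborel A (\<lambda>z. min (p1 z) (p2 z))"
      using int by (rule set_integrable_min)
    fix z assume z: "z \<in> A"
    have scale: "(min w1 w2 / R) * gauss \<beta>' \<mu> z \<le> (w / R) * gauss \<beta>' \<mu> z" if "min w1 w2 \<le> w" for w
      using that R gauss_nonneg[of \<beta>' \<mu> z] \<beta> by (intro mult_right_mono divide_right_mono) (auto simp: \<beta>'_def)
    have "(min w1 w2 / R) * gauss \<beta>' \<mu> z \<le> p1 z"
      using order.trans[OF scale[OF min.cobounded1] lower[of \<beta>1 w1 z]] w p1[OF z] by simp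
    moreover have "(min w1 w2 / R) * gauss \<beta>' \<mu> z \<le> p2 z"
      using order.trans[OF scale[OF min.cobounded2] lower[of \<beta>2 w2 z]] w p2[OF z] by simp
    ultimately show "(min w1 w2 / R) * gauss \<beta>' \<mu> z \<le> min (p1 z) (p2 z)"
      by simp
  qed
  finally show ?thesis .
qed

(* The share of the first component of a two-component mixture with weights x and y after
   tempering with exponent t. *)
definition share :: "real \<Rightarrow> real \<Rightarrow> real \<Rightarrow> real" where
  "share x y t = x powr t / (x powr t + y powr t)"

lemma share_pos: "0 < x \<Longrightarrow> 0 < y \<Longrightarrow> 0 < share x y t"
  by (simp add: share_def add_pos_pos)

lemma share_swap:
  assumes "0 < x" "0 < y"
  shows "share y x t = 1 - share x y t"
proof -
  have "x powr t + y powr t \<noteq> 0" using assms by (smt (verit) powr_gt_zero)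
  then show ?thesis by (simp add: share_def field_simps)
qed

(* The form in which the dependence on t is transparent. *)
lemma share_eq:
  assumes "0 < x" "0 < y"
  shows "share x y t = 1 / (1 + (y / x) powr t)"
  using assms by (simp add: share_def powr_divide field_simps)

lemma share_mono:
  assumes "0 < y" "y \<le> x" "t \<le> t'"
  shows "share x y t \<le> share x y t'"
proof -
  have "(y / x) powr t' \<le> (y / x) powr t"
    using assms by (intro powr_mono') auto
  then show ?thesis
    using assms by (simp add: share_eq frac_le add_pos_nonneg)
qed

lemma share_ge_half:
  assumes "0 < y" "y \<le> x" "0 \<le> t"
  shows "1/2 \<le> share x y t"
proof -
  have "(y / x) powr t \<le> 1"
    using assms by (intro powr_le1) auto
  then have "1/2 \<le> 1 / (1 + (y / x) powr t)"
    using assms by (intro divide_left_mono) (auto simp: add_pos_nonneg)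
  then show ?thesis
    using assms by (simp add: share_eq)
qed

(* If r and 1/r are at most c^M then r^d <= c for every exponent with |d| <= 1/M;
   this is how the assumption a/(1-a) <= c^M enters. *)
lemma powr_small_exponent_le:
  fixes r c d :: real and M :: nat
  assumes "0 < r" "1 \<le> c" "M \<ge> 1" "r \<le> c ^ M" "1 / r \<le> c ^ M" "\<bar>d\<bar> \<le> 1 / M"
  shows "r powr d \<le> c"
proof -
  have "\<bar>ln r\<bar> \<le> M * ln c"
    using assms ln_mono[OF assms(4)] ln_mono[OF assms(5)]
    by (auto simp: ln_realpow ln_div abs_if)
  then have "\<bar>d\<bar> * \<bar>ln r\<bar> \<le> (1 / M) * (M * ln c)"
    using assms by (intro mult_mono) auto
  then have "d * ln r \<le> ln c"
    using assms by (simp add: abs_mult[symmetric])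
  then have "exp (d * ln r) \<le> exp (ln c)" by simp
  then show ?thesis
    using assms by (simp add: powr_def mult.commute)
qed

lemma share_ratio:
  assumes "0 < x" "0 < y" "1 \<le> c" "(y / x) powr (t' - t) \<le> c"
  shows "share x y t \<le> c * share x y t'"
proof -
  define r where "r = y / x"
  have r: "0 < r" using assms by (simp add: r_def)
  have "r powr t' = r powr t * r powr (t' - t)"
    by (simp add: powr_add[symmetric])
  also have "\<dots> \<le> r powr t * c"
    using assms r by (intro mult_left_mono) (auto simp: r_def)
  finally have "1 + r powr t' \<le> c * (1 + r powr t)"
    using assms by (simp add: algebra_simps)
  then show ?thesis
    using assms r by (simp add: share_eq r_def[symmetric] field_simps add_pos_nonneg)
qed

definition ones :: "real^'n" where "ones = (\<chi> i. 1)"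

lemma ones_nonzero: "ones \<noteq> 0"
  by (simp add: ones_def vec_eq_iff)

lemma A1_halfspace: "A1 = {z. ones \<bullet> z < 0}"
  by (simp add: A1_def ones_def inner_vec_def)

lemma A2_halfspace: "A2 = {z. ones \<bullet> z \<ge> 0}"
  by (simp add: A2_def ones_def inner_vec_def)

lemma A1_sets [measurable]: "A1 \<in> sets lborel" and A2_sets [measurable]: "A2 \<in> sets lborel"
  unfolding A1_halfspace A2_halfspace by measurable

lemma A2_mass_eq_A1_mass:
  assumes "\<beta> > 0"
  shows "(LINT z:(A2::(real^'n) set)|lborel. gauss \<beta> (\<chi> i. b) z) = (LINT z:(A1::(real^'n) set)|lborel. gauss \<beta> (\<chi> i. - b) z)"
proof -
  have "(LINT z:{z. ones \<bullet> z \<ge> 0}|lborel. gauss \<beta> (- (\<chi> i. - b)) (z::real^'n))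
      = (LINT z:{z. ones \<bullet> z < 0}|lborel. gauss \<beta> (\<chi> i. - b) (z::real^'n))"
    by (rule gauss_halfspace_reflect[OF assms ones_nonzero])
  moreover have "- (\<chi> i. - b) = (\<chi> i. b :: real^'n)" by (simp add: vec_eq_iff)
  ultimately show ?thesis unfolding A1_halfspace A2_halfspace by simp
qed

lemma A1_mass_ge_half:
  assumes "\<beta> > 0" "b > 0"
  shows "1/2 \<le> (LINT z:(A1::(real^'n) set)|lborel. gauss \<beta> (\<chi> i. - b) z)"
  unfolding A1_halfspace using assms
  by (intro gauss_halfspace_ge_half) (simp_all add: ones_def inner_vec_def)

definition normal_powr_const :: "nat \<Rightarrow> real \<Rightarrow> real" where
  "normal_powr_const n \<beta> = (2*pi) powr (- real n * \<beta> / 2) / (\<beta> / (2*pi)) powr (real n / 2)"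

lemma normal_powr_const_pos: "\<beta> > 0 \<Longrightarrow> normal_powr_const n \<beta> > 0"
  by (simp add: normal_powr_const_def)

lemma normal_id_dens_powr:
  fixes \<mu> z :: "real^'n"
  assumes "\<beta> > 0" "u > 0"
  shows "(u * normal_id_dens \<mu> z) powr \<beta> = u powr \<beta> * normal_powr_const CARD('n) \<beta> * gauss \<beta> \<mu> z"
proof -
  have "(u * normal_id_dens \<mu> z) powr \<beta>
      = u powr \<beta> * ((2 * pi) powr (- real CARD('n) / 2)) powr \<beta> * exp (- (norm (z - \<mu>))\<^sup>2 / 2) powr \<beta>"
    by (simp add: normal_id_dens_def powr_mult)
  also have "\<dots> = u powr \<beta> * (2 * pi) powr (- real CARD('n) * \<beta> / 2) * exp (- \<beta> * (norm (z - \<mu>))\<^sup>2 / 2)"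
    by (simp add: powr_powr exp_powr_real mult.commute)
  finally show ?thesis
    using assms by (simp add: normal_powr_const_def gauss_def)
qed

(* Since the two components of the target live on disjoint sets, its tempered power is a
   mixture of two restricted Gaussians of precision beta. *)
lemma pi_tilde_powr:
  fixes z :: "real^'n"
  assumes "\<beta> > 0" "0 < a" "a < 1"
  shows "pi_tilde a b z powr \<beta> = normal_powr_const CARD('n) \<beta> *
           (a powr \<beta> * (indicator A1 z * gauss \<beta> (\<chi> i. - b) z)
            + (1 - a) powr \<beta> * (indicator A2 z * gauss \<beta> (\<chi> i. b) z))"
proof (cases "z \<in> A1")
  case True
  then have "z \<notin> A2" by (simp add: A1_def A2_def)
  then show ?thesis using True normal_id_dens_powr[of \<beta> a "\<chi> i. - b" z] assms
    by (simp add: pi_tilde_def)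
next
  case False
  then have "z \<in> A2" by (simp add: A1_def A2_def)
  then show ?thesis using False normal_id_dens_powr[of \<beta> "1 - a" "\<chi> i. b" z] assms
    by (simp add: pi_tilde_def)
qed

lemma pi_tilde_powr_integral:
  assumes "\<beta> > 0" "0 < a" "a < 1"
  shows "(\<integral>z. pi_tilde a b (z :: real^'n) powr \<beta> \<partial>lborel)
       = normal_powr_const CARD('n) \<beta> * (a powr \<beta> + (1 - a) powr \<beta>)
         * (LINT z:(A1::(real^'n) set)|lborel. gauss \<beta> (\<chi> i. - b) z)"
proof -
  let ?g1 = "\<lambda>z::real^'n. indicator A1 z * gauss \<beta> (\<chi> i. - b) z"
  let ?g2 = "\<lambda>z::real^'n. indicator A2 z * gauss \<beta> (\<chi> i. b) z"
  have int: "integrable lborel ?g1" "integrable lborel ?g2"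
    using gauss_set_integrable[OF assms(1) A1_sets] gauss_set_integrable[OF assms(1) A2_sets]
    by (simp_all add: set_integrable_def)
  have "(\<integral>z. pi_tilde a b (z :: real^'n) powr \<beta> \<partial>lborel)
      = normal_powr_const CARD('n) \<beta> * (a powr \<beta> * integral\<^sup>L lborel ?g1 + (1 - a) powr \<beta> * integral\<^sup>L lborel ?g2)"
    using int by (simp add: pi_tilde_powr[OF assms])
  then show ?thesis
    using A2_mass_eq_A1_mass[OF assms(1), of b, where 'n='n]
    by (simp add: set_lebesgue_integral_def algebra_simps)
qed

definition tempered_component :: "real \<Rightarrow> real \<Rightarrow> (real^'n) set \<Rightarrow> real^'n \<Rightarrow> real \<Rightarrow> real \<Rightarrow> bool" where
  "tempered_component a b A \<mu> x y \<longleftrightarrow>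
     A \<in> sets lborel \<and>
     (\<forall>\<beta>>0. 1/2 \<le> (LINT z:A|lborel. gauss \<beta> \<mu> z)) \<and>
     (\<forall>\<beta>>0. \<forall>z\<in>A. pi_temp a b \<beta> z = share x y \<beta> * gauss \<beta> \<mu> z / (LINT z:A|lborel. gauss \<beta> \<mu> z))"

lemma tempered_component_A1:
  assumes "0 < a" "a < 1" "b > 0"
  shows "tempered_component a b A1 (\<chi> i. - b) a (1 - a)"
  unfolding tempered_component_def
proof (intro conjI allI impI ballI)
  fix \<beta> :: real and z :: "real^'n" assume \<beta>: "\<beta> > 0" and z: "z \<in> A1"
  let ?m = "LINT z:(A1::(real^'n) set)|lborel. gauss \<beta> (\<chi> i. - b) z"
  have pos: "0 < normal_powr_const CARD('n) \<beta>" "0 < a powr \<beta> + (1 - a) powr \<beta>" "0 < ?m"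
    using normal_powr_const_pos[OF \<beta>] A1_mass_ge_half[OF \<beta> assms(3), where 'n='n] assms
    by (auto intro: add_pos_pos)
  have "z \<notin> A2" using z by (simp add: A1_def A2_def)
  then have "pi_temp a b \<beta> z = normal_powr_const CARD('n) \<beta> * (a powr \<beta> * gauss \<beta> (\<chi> i. - b) z)
      / (normal_powr_const CARD('n) \<beta> * (a powr \<beta> + (1 - a) powr \<beta>) * ?m)"
    unfolding pi_temp_def pi_tilde_powr_integral[OF \<beta> assms(1,2)]
    using z by (simp add: pi_tilde_powr[OF \<beta> assms(1,2)])
  also have "\<dots> = share a (1 - a) \<beta> * gauss \<beta> (\<chi> i. - b) z / ?m"
    using pos by (simp add: share_def)
  finally show "pi_temp a b \<beta> z = share a (1 - a) \<beta> * gauss \<beta> (\<chi> i. - b) z / ?m" .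
qed (use A1_mass_ge_half A1_sets assms in auto)

lemma tempered_component_A2:
  assumes "0 < a" "a < 1" "b > 0"
  shows "tempered_component a b A2 (\<chi> i. b) (1 - a) a"
  unfolding tempered_component_def
proof (intro conjI allI impI ballI)
  fix \<beta> :: real assume \<beta>: "\<beta> > 0"
  show "1/2 \<le> (LINT z:(A2::(real^'n) set)|lborel. gauss \<beta> (\<chi> i. b) z)"
    using A1_mass_ge_half[OF \<beta> assms(3)] A2_mass_eq_A1_mass[OF \<beta>, of b, where 'n='n] by simp
  fix z :: "real^'n" assume z: "z \<in> A2"
  let ?m = "LINT z:(A2::(real^'n) set)|lborel. gauss \<beta> (\<chi> i. b) z"
  have m: "(LINT z:(A1::(real^'n) set)|lborel. gauss \<beta> (\<chi> i. - b) z) = ?m"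
    using A2_mass_eq_A1_mass[OF \<beta>, of b, where 'n='n] by simp
  have pos: "0 < normal_powr_const CARD('n) \<beta>" "0 < a powr \<beta> + (1 - a) powr \<beta>" "0 < ?m"
    using normal_powr_const_pos[OF \<beta>] A1_mass_ge_half[OF \<beta> assms(3), where 'n='n] assms m
    by (auto intro: add_pos_pos)
  have "z \<notin> A1" using z by (simp add: A1_def A2_def)
  then have "pi_temp a b \<beta> z = normal_powr_const CARD('n) \<beta> * ((1 - a) powr \<beta> * gauss \<beta> (\<chi> i. b) z)
      / (normal_powr_const CARD('n) \<beta> * (a powr \<beta> + (1 - a) powr \<beta>) * ?m)"
    unfolding pi_temp_def pi_tilde_powr_integral[OF \<beta> assms(1,2)] m
    using z by (simp add: pi_tilde_powr[OF \<beta> assms(1,2)])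
  also have "\<dots> = share (1 - a) a \<beta> * gauss \<beta> (\<chi> i. b) z / ?m"
    using pos by (simp add: share_def add.commute)
  finally show "pi_temp a b \<beta> z = share (1 - a) a \<beta> * gauss \<beta> (\<chi> i. b) z / ?m" .
qed (use A2_sets in simp)

lemma tempered_component_mass:
  assumes comp: "tempered_component a b A \<mu> x y" and \<beta>: "\<beta> > 0"
  shows "pi_meas a b \<beta> A = share x y \<beta>"
proof -
  let ?m = "LINT z:A|lborel. gauss \<beta> \<mu> z"
  have A: "A \<in> sets lborel" and m: "1/2 \<le> ?m"
    and dens: "\<And>z. z \<in> A \<Longrightarrow> pi_temp a b \<beta> z = (share x y \<beta> / ?m) * gauss \<beta> \<mu> z"
    using comp \<beta> by (auto simp: tempered_component_def)
  have "pi_meas a b \<beta> A = (LINT z:A|lborel. (share x y \<beta> / ?m) * gauss \<beta> \<mu> z)"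
    unfolding pi_meas_def using A dens by (intro set_lebesgue_integral_cong) auto
  also have "\<dots> = share x y \<beta>"
    using m by simp
  finally show ?thesis .
qed

lemma pi_meas_A1:
  assumes "0 < a" "a < 1" "b > 0" "\<beta> > 0"
  shows "pi_meas a b \<beta> A1 = share a (1 - a) \<beta>"
  by (rule tempered_component_mass[OF tempered_component_A1[OF assms(1-3)] assms(4)])

lemma prod_ratio_telescope:
  fixes f :: "nat \<Rightarrow> real"
  assumes "\<And>k. k \<le> n \<Longrightarrow> f k \<noteq> 0"
  shows "(\<Prod>k\<in>{1..n}. f (k - 1) / f k) = f 0 / f n"
  using assms
proof (induction n)
  case (Suc n)
  have "(\<Prod>k\<in>{1..Suc n}. f (k - 1) / f k) = (f 0 / f n) * (f n / f (Suc n))"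
    using Suc by (simp add: prod.nat_ivl_Suc')
  also have "\<dots> = f 0 / f (Suc n)"
    using Suc.prems[of n] by simp
  finally show ?case .
qed simp

(* The factor gamma for one component and an arbitrary increasing schedule: for the heavier
   component the ratios telescope to share(t_0)/share(t_N) >= share(t_0) >= 1/2, for the
   lighter one every ratio is at least 1. *)
lemma tempered_component_gamma:
  fixes A :: "(real^'n) set" and t :: "nat \<Rightarrow> real"
  assumes comp: "tempered_component a b A \<mu> x y" and xy: "0 < x" "0 < y"
    and pos: "\<And>k. k \<le> N \<Longrightarrow> 0 < t k" and mono: "\<And>k. k < N \<Longrightarrow> t k \<le> t (Suc k)"
  shows "1/2 \<le> (\<Prod>k\<in>{1..N}. min 1 (pi_meas a b (t (k - 1)) A / pi_meas a b (t k) A))"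
proof -
  define s where "s k = share x y (t k)" for k
  have s_pos: "0 < s k" for k
    using xy by (simp add: s_def share_pos)
  have factor: "pi_meas a b (t (k - 1)) A / pi_meas a b (t k) A = s (k - 1) / s k" if "k \<in> {1..N}" for k
  proof -
    have "k - 1 \<le> N" "k \<le> N" using that by auto
    then show ?thesis
      using tempered_component_mass[OF comp pos] by (simp add: s_def)
  qed
  have step: "t (k - 1) \<le> t k" if "k \<in> {1..N}" for k
  proof -
    have "k - 1 < N" using that by auto
    then show ?thesis using mono that by fastforce
  qed
  show ?thesis
  proof (cases "y \<le> x")
    case True
    have "(\<Prod>k\<in>{1..N}. min 1 (pi_meas a b (t (k - 1)) A / pi_meas a b (t k) A))
        = (\<Prod>k\<in>{1..N}. s (k - 1) / s k)"
    proof (rule prod.cong[OF refl])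
      fix k assume k: "k \<in> {1..N}"
      have "s (k - 1) \<le> s k"
        using share_mono[OF xy(2) True step[OF k]] by (simp add: s_def)
      then show "min 1 (pi_meas a b (t (k - 1)) A / pi_meas a b (t k) A) = s (k - 1) / s k"
        using factor[OF k] s_pos[of k] by simp
    qed
    also have "\<dots> = s 0 / s N"
      using s_pos by (intro prod_ratio_telescope) (simp add: less_imp_neq[symmetric])
    also have "\<dots> \<ge> s 0"
      using s_pos[of 0] s_pos[of N] share_swap[OF xy, of "t N"] share_pos[OF xy(2,1), of "t N"]
      by (simp add: s_def le_divide_eq)
    finally show ?thesis
      using share_ge_half[OF xy(2) True less_imp_le[OF pos[of 0]]] by (simp add: s_def)
  next
    case False
    have "s k \<le> s (k - 1)" if "k \<in> {1..N}" for k
      using share_mono[of x y "t (k - 1)" "t k"] step[OF that] False xy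
        share_swap[OF xy(2,1), of "t k"] share_swap[OF xy(2,1), of "t (k - 1)"]
      by (simp add: s_def)
    then have "(\<Prod>k\<in>{1..N}. min 1 (pi_meas a b (t (k - 1)) A / pi_meas a b (t k) A)) = 1"
      using factor s_pos by (intro prod.neutral) simp
    then show ?thesis by simp
  qed
qed

(* The factor delta for one component and two neighbouring exponents: the masses differ at
   most by the factor c, and the Gaussian overlap bound loses at most 2*sqrt M. *)
lemma tempered_component_delta:
  fixes A :: "(real^'n) set"
  assumes comp: "tempered_component a b A \<mu> x y" and xy: "0 < x" "0 < y" and c: "1 \<le> c"
    and ratio: "x / y \<le> c ^ CARD('n)" "y / x \<le> c ^ CARD('n)"
    and \<beta>: "0 < \<beta>" "0 < \<beta>'" and close: "\<bar>\<beta>' - \<beta>\<bar> \<le> 1 / CARD('n)"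
    and spread: "(max \<beta> \<beta>' / min \<beta> \<beta>') powr (CARD('n) / 2) \<le> sqrt CARD('n)"
  shows "1 / (2 * c * sqrt CARD('n))
           \<le> (1 / pi_meas a b \<beta> A) * (LINT z:A|lborel. min (pi_temp a b \<beta> z) (pi_temp a b \<beta>' z))"
proof -
  let ?w = "share x y \<beta>" and ?w' = "share x y \<beta>'"
  let ?R = "(max \<beta> \<beta>' / min \<beta> \<beta>') powr (CARD('n) / 2)"
  have w: "0 < ?w" "0 < ?w'" using xy by (simp_all add: share_pos)
  have R: "1 \<le> ?R" using \<beta> by (intro ge_one_powr_ge_zero) auto
  have overlap: "min ?w ?w' / (2 * ?R) \<le> (LINT z:A|lborel. min (pi_temp a b \<beta> z) (pi_temp a b \<beta>' z))"
    using comp \<beta> w unfolding tempered_component_def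
    by (intro gauss_overlap[where \<mu> = \<mu>, simplified]) auto
  have "(y / x) powr (\<beta>' - \<beta>) \<le> c"
    using xy c ratio close by (intro powr_small_exponent_le[where M = "CARD('n)"]) auto
  then have "?w \<le> c * ?w'" by (rule share_ratio[OF xy c])
  then have "?w / c \<le> min ?w ?w'"
    using c w by (simp add: divide_le_eq mult_le_cancel_left1 mult.commute)
  then have "(?w / c) / (2 * sqrt CARD('n)) \<le> min ?w ?w' / (2 * ?R)"
    using spread R w by (intro frac_le) auto
  also note overlap
  finally have "(?w / c) / (2 * sqrt CARD('n)) \<le> (LINT z:A|lborel. min (pi_temp a b \<beta> z) (pi_temp a b \<beta>' z))" .
  then show ?thesis
    using w c tempered_component_mass[OF comp \<beta>(1)] by (simp add: field_simps)
qed

definition beta_grid :: "nat \<Rightarrow> real set" where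
  "beta_grid M = (\<lambda>k. real M powr (- (real M - real k) / real M)) ` {0..M} \<union> (\<lambda>k. real k / real M) ` {1..M}"

lemma betas_beta_grid: "betas M = sorted_list_of_set (beta_grid M)"
  by (simp add: betas_def beta_grid_def)

lemma set_betas: "set (betas M) = beta_grid M"
  by (simp add: betas_beta_grid beta_grid_def)

lemma beta_grid_bounds:
  assumes "M \<ge> 1" "x \<in> beta_grid M"
  shows "1 / real M \<le> x" "x \<le> 1"
proof -
  have M: "real M \<ge> 1" using assms by simp
  have geom: "1 / real M \<le> real M powr e \<and> real M powr e \<le> 1" if "-1 \<le> e" "e \<le> 0" for e
  proof -
    have "real M powr -1 \<le> real M powr e" "real M powr e \<le> real M powr 0"
      using that M by (simp_all only: powr_mono)
    moreover have "real M powr -1 = 1 / real M" "real M powr 0 = 1"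
      using M by (simp_all add: powr_minus_divide)
    ultimately show ?thesis by simp
  qed
  have "1 / real M \<le> x \<and> x \<le> 1"
    using assms(2) unfolding beta_grid_def
  proof (elim UnE imageE)
    fix k assume k: "k \<in> {0..M}" and x: "x = real M powr (- (real M - real k) / real M)"
    have "-1 \<le> - (real M - real k) / real M" "- (real M - real k) / real M \<le> 0"
      using k M by (auto simp: field_simps)
    then show ?thesis unfolding x by (rule geom)
  next
    fix k assume k: "k \<in> {1..M}" and x: "x = real k / real M"
    show ?thesis unfolding x using k M by (auto simp: divide_right_mono)
  qed
  then show "1 / real M \<le> x" "x \<le> 1" by auto
qed

lemma beta_grid_additive_gap:
  assumes M: "M \<ge> 1" and x: "x \<in> beta_grid M" "x < 1"
  shows "\<exists>s\<in>beta_grid M. x < s \<and> s \<le> x + 1 / real M"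
proof -
  have M1: "real M \<ge> 1" using M by simp
  have x0: "0 < x" using beta_grid_bounds(1)[OF M x(1)] M1 by (smt (verit) divide_pos_pos)
  define j where "j = \<lfloor>x * real M\<rfloor>"
  have j: "0 \<le> j" "j < int M"
    using x0 x(2) M1 by (auto simp: j_def floor_less_iff)
  define k where "k = nat j + 1"
  have k: "k \<in> {1..M}" and rk: "real k = real_of_int j + 1"
    using j by (auto simp: k_def)
  have "x < real k / real M" "real k / real M \<le> x + 1 / real M"
    using M1 unfolding rk j_def by (simp_all add: field_simps) linarith+
  moreover have "real k / real M \<in> beta_grid M" using k unfolding beta_grid_def by auto
  ultimately show ?thesis by blast
qed

lemma beta_grid_geometric_gap:
  assumes M: "M \<ge> 1" and x: "x \<in> beta_grid M" "x < 1"
  shows "\<exists>s\<in>beta_grid M. x < s \<and> s \<le> x * real M powr (1 / real M)"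
proof -
  have xb: "1 / real M \<le> x" using beta_grid_bounds(1)[OF M x(1)] .
  have M2: "real M > 1" using M xb x(2) by (cases "M = 1") auto
  have x0: "x > 0" using xb M2 by (smt (verit) divide_pos_pos)
  define t where "t = log (real M) x"
  have xt: "real M powr t = x" using x0 M2 by (simp add: t_def)
  have t: "-1 \<le> t" "t < 0"
    using xb x(2) x0 M2 by (auto simp: t_def log_less_zero_cancel_iff le_log_iff powr_minus divide_inverse)
  define j where "j = \<lfloor>real M * t\<rfloor>"
  have "real M * (-1) \<le> real M * t" using t M2 by (intro mult_left_mono) auto
  then have j: "- int M \<le> j" "j < 0"
    using t M2 by (auto simp: j_def le_floor_iff floor_less_iff mult_pos_neg)
  define k where "k = nat (j + int M + 1)"
  have k: "k \<in> {0..M}" and e: "- (real M - real k) / real M = (real_of_int j + 1) / real M"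
    using j by (auto simp: k_def)
  have lt: "t < (real_of_int j + 1) / real M" and le: "(real_of_int j + 1) / real M \<le> t + 1 / real M"
    using M2 unfolding j_def by (simp_all add: field_simps) linarith+
  let ?s = "real M powr (- (real M - real k) / real M)"
  have "x < ?s" unfolding e using powr_less_mono[OF lt M2] xt by simp
  moreover have "?s \<le> real M powr (t + 1 / real M)" unfolding e using le M2 by (intro powr_mono) auto
  then have "?s \<le> x * real M powr (1 / real M)" using xt by (simp add: powr_add)
  moreover have "?s \<in> beta_grid M" using k unfolding beta_grid_def by auto
  ultimately show ?thesis by blast
qed

lemma sorted_next_le:
  fixes xs :: "real list"
  assumes "sorted xs" "Suc k < length xs" "s \<in> set xs" "xs ! k < s"
  shows "xs ! Suc k \<le> s"
proof -
  obtain j where j: "j < length xs" "s = xs ! j" using assms(3) by (auto simp: in_set_conv_nth)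
  have "k < j"
  proof (rule ccontr)
    assume "\<not> k < j"
    then have "xs ! j \<le> xs ! k" using sorted_nth_mono[OF assms(1)] assms(2) by simp
    then show False using assms(4) j(2) by simp
  qed
  then show ?thesis using sorted_nth_mono[OF assms(1), of "Suc k" j] j by simp
qed

lemma betas_nonempty: "M \<ge> 1 \<Longrightarrow> betas M \<noteq> []"
  by (auto simp: betas_beta_grid beta_grid_def)

lemma betas_pos:
  assumes "M \<ge> 1" "k < length (betas M)"
  shows "0 < betas M ! k"
proof -
  have "betas M ! k \<in> beta_grid M"
    using nth_mem[OF assms(2)] by (simp add: set_betas)
  then have "1 / real M \<le> betas M ! k" by (rule beta_grid_bounds(1)[OF assms(1)])
  moreover have "0 < 1 / real M" using assms(1) by simp
  ultimately show ?thesis by linarith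
qed

lemma betas_consecutive:
  assumes M: "M \<ge> 1" and k: "Suc k < length (betas M)"
  defines "\<beta> \<equiv> betas M"
  shows "\<beta> ! k < \<beta> ! Suc k" "\<beta> ! Suc k - \<beta> ! k \<le> 1 / real M"
    and "(\<beta> ! Suc k / \<beta> ! k) powr (real M / 2) \<le> sqrt (real M)"
proof -
  have sorted: "sorted \<beta>" "distinct \<beta>" and set: "set \<beta> = beta_grid M"
    by (simp_all add: \<beta>_def betas_beta_grid beta_grid_def)
  have x: "\<beta> ! k \<in> beta_grid M" using set nth_mem[of k \<beta>] k by (simp add: \<beta>_def)
  show lt: "\<beta> ! k < \<beta> ! Suc k"
    using sorted k by (simp add: \<beta>_def sorted_wrt_nth_less strict_sorted_iff)
  moreover have "\<beta> ! Suc k \<in> beta_grid M"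
    using k set unfolding \<beta>_def by (metis nth_mem)
  then have "\<beta> ! Suc k \<le> 1" by (rule beta_grid_bounds(2)[OF M])
  ultimately have x1: "\<beta> ! k < 1" by simp
  obtain s where "s \<in> beta_grid M" "\<beta> ! k < s" "s \<le> \<beta> ! k + 1 / real M"
    using beta_grid_additive_gap[OF M x x1] by blast
  then show "\<beta> ! Suc k - \<beta> ! k \<le> 1 / real M"
    using sorted_next_le[OF sorted(1) _ _, of k s] k set by (simp add: \<beta>_def)
  obtain s where "s \<in> beta_grid M" "\<beta> ! k < s" "s \<le> \<beta> ! k * real M powr (1 / real M)"
    using beta_grid_geometric_gap[OF M x x1] by blast
  then have "\<beta> ! Suc k \<le> \<beta> ! k * real M powr (1 / real M)"
    using sorted_next_le[OF sorted(1) _ _, of k s] k set by (simp add: \<beta>_def)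
  moreover have pos: "0 < \<beta> ! k" using betas_pos[OF M] k by (simp add: \<beta>_def)
  ultimately have "\<beta> ! Suc k / \<beta> ! k \<le> real M powr (1 / real M)"
    by (simp add: divide_le_eq mult.commute)
  then have "(\<beta> ! Suc k / \<beta> ! k) powr (real M / 2) \<le> (real M powr (1 / real M)) powr (real M / 2)"
    using pos lt by (intro powr_mono2) auto
  also have "\<dots> = sqrt (real M)" using M by (simp add: powr_powr powr_half_sqrt)
  finally show "(\<beta> ! Suc k / \<beta> ! k) powr (real M / 2) \<le> sqrt (real M)" .
qed

lemma betas_neighbours:
  assumes M: "M \<ge> 1" and kl: "k < length (betas M)" "l < length (betas M)" "k = l + 1 \<or> l = k + 1"
  defines "\<beta> \<equiv> betas M"
  shows "\<bar>\<beta> ! l - \<beta> ! k\<bar> \<le> 1 / real M"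
    and "(max (\<beta> ! k) (\<beta> ! l) / min (\<beta> ! k) (\<beta> ! l)) powr (real M / 2) \<le> sqrt (real M)"
proof -
  define i where "i = min k l"
  have i: "Suc i < length \<beta>" "{k, l} = {i, Suc i}" using kl by (auto simp: i_def \<beta>_def)
  note cons = betas_consecutive[OF M i(1)[unfolded \<beta>_def]]
  from i(2) have "(\<beta> ! k = \<beta> ! i \<and> \<beta> ! l = \<beta> ! Suc i) \<or> (\<beta> ! k = \<beta> ! Suc i \<and> \<beta> ! l = \<beta> ! i)"
    by (auto simp: doubleton_eq_iff)
  then show "\<bar>\<beta> ! l - \<beta> ! k\<bar> \<le> 1 / real M"
    and "(max (\<beta> ! k) (\<beta> ! l) / min (\<beta> ! k) (\<beta> ! l)) powr (real M / 2) \<le> sqrt (real M)"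
    using cons unfolding \<beta>_def[symmetric] by (auto simp: max_def min_def)
qed

theorem mainTheorem12:
  fixes b c a :: real
  assumes "b > 0" and "c \<ge> 1"
    and "1/2 \<le> a" and "a < 1"
    and "a / (1 - a) \<le> c ^ CARD('n)"
  defines "\<beta> \<equiv> betas CARD('n)"
  defines "N \<equiv> length (betas CARD('n)) - 1"
  defines "\<A> \<equiv> {A1 :: (real^'n) set, A2}"
  shows "(\<forall>k<N. pi_meas a b (\<beta> ! k) (A1 :: (real^'n) set) \<le> pi_meas a b (\<beta> ! Suc k) A1)
       \<and> (\<forall>A\<in>\<A>. (\<Prod>k\<in>{1..N}. min 1 (pi_meas a b (\<beta> ! (k - 1)) A / pi_meas a b (\<beta> ! k) A)) \<ge> 1/2)
       \<and> (\<forall>k\<le>N. \<forall>l\<le>N. \<forall>A\<in>\<A>. (k = l + 1 \<or> l = k + 1) \<longrightarrow>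
            (1 / pi_meas a b (\<beta> ! k) A) * (LINT z:A|lborel. min (pi_temp a b (\<beta> ! k) z) (pi_temp a b (\<beta> ! l) z))
              \<ge> 1 / (2 * c * sqrt (real CARD('n))))"
proof -
  let ?M = "CARD('n)"
  have M: "?M \<ge> 1" by (simp add: Suc_le_eq)
  have len: "length \<beta> = Suc N" using betas_nonempty[OF M] by (simp add: \<beta>_def N_def)
  have pos: "0 < \<beta> ! k" if "k \<le> N" for k
    using betas_pos[OF M] that len by (simp add: \<beta>_def)
  have mono: "\<beta> ! k \<le> \<beta> ! Suc k" if "k < N" for k
    using betas_consecutive(1)[OF M] that len by (simp add: \<beta>_def less_imp_le)
  have a: "0 < a" "0 < 1 - a" "1 - a \<le> a" using assms by auto
  have ratios: "a / (1 - a) \<le> c ^ ?M" "(1 - a) / a \<le> c ^ ?M"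
    using assms a by (auto intro: order.trans[OF _ one_le_power])
  have components: "tempered_component a b (A1 :: (real^'n) set) (\<chi> i. - b) a (1 - a)"
      "tempered_component a b (A2 :: (real^'n) set) (\<chi> i. b) (1 - a) a"
    using assms by (auto intro: tempered_component_A1 tempered_component_A2)
  show ?thesis
  proof (intro conjI allI impI ballI)
    fix k assume k: "k < N"
    then have "share a (1 - a) (\<beta> ! k) \<le> share a (1 - a) (\<beta> ! Suc k)"
      using a mono by (intro share_mono) auto
    then show "pi_meas a b (\<beta> ! k) (A1 :: (real^'n) set) \<le> pi_meas a b (\<beta> ! Suc k) A1"
      using k pos assms by (simp add: pi_meas_A1)
  next
    fix A assume "A \<in> \<A>"
    then show "1/2 \<le> (\<Prod>k\<in>{1..N}. min 1 (pi_meas a b (\<beta> ! (k - 1)) A / pi_meas a b (\<beta> ! k) A))"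
      using tempered_component_gamma[OF components(1) a(1,2), of N "(!) \<beta>"]
        tempered_component_gamma[OF components(2) a(2,1), of N "(!) \<beta>"] pos mono
      by (auto simp: \<A>_def)
  next
    fix k l A assume kl: "k \<le> N" "l \<le> N" "A \<in> \<A>" "k = l + 1 \<or> l = k + 1"
    note neighbours = betas_neighbours[OF M, of k l, folded \<beta>_def]
    show "1 / (2 * c * sqrt ?M)
        \<le> (1 / pi_meas a b (\<beta> ! k) A) * (LINT z:A|lborel. min (pi_temp a b (\<beta> ! k) z) (pi_temp a b (\<beta> ! l) z))"
      using kl len neighbours pos[OF kl(1)] pos[OF kl(2)] ratios assms(2)
        tempered_component_delta[OF components(1) a(1,2)] tempered_component_delta[OF components(2) a(2,1)]
      by (auto simp: \<A>_def abs_minus_commute)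
  qed
qed

end
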